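(* Let $n\geq 2$ be an integer and let $CCC(n)$ be the crystal cubic carbon graph with $n$ layers. Then the minimum cardinality of a strong resolving set of $CCC(n)$ is $sdim(CCC(n))=32\times 7^{n-2}-1$.
   Context: All graphs are simple and connected; $d(u,v)$ is the shortest-path distance. For vertices $u,v$, $I_G[u,v]$ is the set of vertices lying on some shortest $u$–$v$ path. A vertex $w$ strongly resolves $u$ and $v$ if $v\in I_G[u,w]$ or $u\in I_G[v,w]$. A set $R$ of vertices is a strong resolving set of $G$ if every two distinct vertices of $G$ are strongly resolved by some vertex of $R$; $sdim(G)$ is the minimum size of a strong resolving set. The cube $C_4\Box P_2$ is the graph on $\{1,\dots,8\}$ with edges $12,23,34,14,56,67,78,58$ and $15,26,37,48$. The crystal cubic carbon $CCC(n)$ is constructed as follows. Its vertex set is partitioned into layers $L_1,\dots,L_n$. Layer $L_1$ is a copy of $C_4\Box P_2$ with vertices $1,\dots,8$. For $2\leq k\leq n$, layer $L_k$ consists of $8\times 7^{k-2}$ vertex-disjoint copies of $C_4\Box P_2$ (called cubes), each cube having a distinguished vertex (the vertex labelled $1$ in its copy) called its head vertex. Each vertex $r\in L_1$ is joined by an edge to the head vertex of exactly one cube of $L_2$ (distinct vertices of $L_1$ to distinct cubes). For $2\leq k<n$, each of the $7$ non-head vertices of each cube of $L_k$ is joined by an edge to the head vertex of exactly one cube of $L_{k+1}$, in such a way that every cube of $L_{k+1}$ has its head joined to exactly one such vertex. There are no other edges. Thus $CCC(n)$ has $8+64\sum_{k=2}^{n}7^{k-2}$ vertices. *)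

theory Defs
  imports Main
begin

definition is_walk :: "('a \<Rightarrow> 'a \<Rightarrow> bool) \<Rightarrow> 'a set \<Rightarrow> 'a list \<Rightarrow> bool" where
  "is_walk E V xs \<longleftrightarrow> xs \<noteq> [] \<and> set xs \<subseteq> V \<and>
     (\<forall>i. Suc i < length xs \<longrightarrow> E (xs ! i) (xs ! Suc i))"

definition gdist :: "'a set \<Rightarrow> ('a \<Rightarrow> 'a \<Rightarrow> bool) \<Rightarrow> 'a \<Rightarrow> 'a \<Rightarrow> nat" where
  "gdist V E u v = (LEAST k. \<exists>xs. is_walk E V xs \<and> hd xs = u \<and> last xs = v \<and> length xs = Suc k)"

definition interval :: "'a set \<Rightarrow> ('a \<Rightarrow> 'a \<Rightarrow> bool) \<Rightarrow> 'a \<Rightarrow> 'a \<Rightarrow> 'a set" where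
  "interval V E u v = {w \<in> V. gdist V E u w + gdist V E w v = gdist V E u v}"

definition strongly_resolves :: "'a set \<Rightarrow> ('a \<Rightarrow> 'a \<Rightarrow> bool) \<Rightarrow> 'a \<Rightarrow> 'a \<Rightarrow> 'a \<Rightarrow> bool" where
  "strongly_resolves V E w u v \<longleftrightarrow> v \<in> interval V E u w \<or> u \<in> interval V E v w"

definition strong_resolving_set :: "'a set \<Rightarrow> ('a \<Rightarrow> 'a \<Rightarrow> bool) \<Rightarrow> 'a set \<Rightarrow> bool" where
  "strong_resolving_set V E R \<longleftrightarrow> R \<subseteq> V \<and>
     (\<forall>u\<in>V. \<forall>v\<in>V. u \<noteq> v \<longrightarrow> (\<exists>w\<in>R. strongly_resolves V E w u v))"

definition sdim :: "'a set \<Rightarrow> ('a \<Rightarrow> 'a \<Rightarrow> bool) \<Rightarrow> nat" where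
  "sdim V E = Min (card ` {R. strong_resolving_set V E R})"

definition cube_adj :: "nat \<Rightarrow> nat \<Rightarrow> bool" where
  "cube_adj a b \<longleftrightarrow> {a, b} \<in> {{1,2},{2,3},{3,4},{1,4},{5,6},{6,7},{7,8},{5,8},
                                {1,5},{2,6},{3,7},{4,8}}"

text \<open>A vertex in layer k is a list of length k: [v] for L1; for k \<ge> 2,
  [r, c_2, ..., c_(k-1), v] where r \<in> {1..8} is the vertex of L1 the chain starts at,
  c_j \<in> {2..8} are the non-head vertices through which the cube hangs, and v \<in> {1..8}
  is the label of the vertex within its cube (1 = head).\<close>
definition CCC_V :: "nat \<Rightarrow> nat list set" where
  "CCC_V n = {xs. 1 \<le> length xs \<and> length xs \<le> n \<and> set xs \<subseteq> {1..8} \<and>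
                  (\<forall>i. 0 < i \<and> Suc i < length xs \<longrightarrow> xs ! i \<noteq> 1)}"

definition CCC_E0 :: "nat list \<Rightarrow> nat list \<Rightarrow> bool" where
  "CCC_E0 xs ys \<longleftrightarrow>
     (xs \<noteq> [] \<and> ys \<noteq> [] \<and> butlast xs = butlast ys \<and> cube_adj (last xs) (last ys)) \<or>
     (xs \<noteq> [] \<and> ys = xs @ [1] \<and> (length xs = 1 \<or> last xs \<noteq> 1))"

definition CCC_E :: "nat list \<Rightarrow> nat list \<Rightarrow> bool" where
  "CCC_E xs ys \<longleftrightarrow> CCC_E0 xs ys \<or> CCC_E0 ys xs"

end

(*
  Labelling the vertices of C4 x P2 by bit vectors identifies it with the 3-cube, and the
  distance of CCC(n) becomes a closed formula: two vertices climb to the cube in which their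
  paths branch and cross it along a Hamming geodesic. That this formula is the graph distance
  follows from two local properties: it changes by at most one along an edge, and every vertex
  other than u has a neighbour one step closer to u.

  A set is strongly resolving iff it contains a vertex of every mutually maximally distant
  pair (Oellermann and Peters-Fransen): such a pair is resolved only by its own members, and
  for every pair u, v a longest geodesic a ... u ... v ... b has mutually maximally distant
  ends, both of which resolve u and v. In CCC(n) a vertex none of whose neighbours is farther
  from v is a leaf that is either the corner 7 of its cube or the antipode of v in the same
  leaf cube. So each of the N = 8 * 7^(n-2) leaf cubes carries three disjoint antipodal pairs
  of non-head vertices, and the N corners labelled 7 are pairwise mutually maximally distant;
  this forces 3N + (N - 1) vertices, and the leaves labelled 2, 3, 4 or 7 without one corner
  suffice.
*)
theory Submission
  imports Defs "HOL-Library.Disjoint_Sets"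
begin

section \<open>Strong resolving sets via mutually maximally distant pairs\<close>

definition maximally_distant :: "'a set \<Rightarrow> ('a \<Rightarrow> 'a \<Rightarrow> bool) \<Rightarrow> 'a \<Rightarrow> 'a \<Rightarrow> bool" where
  "maximally_distant V E u v \<longleftrightarrow> (\<forall>w\<in>V. E v w \<longrightarrow> gdist V E u w \<le> gdist V E u v)"

definition mutually_maximally_distant :: "'a set \<Rightarrow> ('a \<Rightarrow> 'a \<Rightarrow> bool) \<Rightarrow> 'a \<Rightarrow> 'a \<Rightarrow> bool" where
  "mutually_maximally_distant V E u v \<longleftrightarrow> maximally_distant V E u v \<and> maximally_distant V E v u"

lemma is_walk_snoc:
  assumes "xs \<noteq> []"
  shows "is_walk E V (xs @ [y]) \<longleftrightarrow> is_walk E V xs \<and> y \<in> V \<and> E (last xs) y"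
proof -
  have "(\<forall>i. Suc i < length (xs @ [y]) \<longrightarrow> E ((xs @ [y]) ! i) ((xs @ [y]) ! Suc i)) \<longleftrightarrow>
        (\<forall>i. Suc i < length xs \<longrightarrow> E (xs ! i) (xs ! Suc i)) \<and> E (last xs) y"
    (is "?l \<longleftrightarrow> ?r")
  proof
    assume l: ?l
    have "E (xs ! i) (xs ! Suc i)" if "Suc i < length xs" for i
      using l[rule_format, of i] that by (simp add: nth_append)
    moreover have "E (last xs) y"
      using l[rule_format, of "length xs - 1"] assms by (simp add: nth_append last_conv_nth)
    ultimately show ?r by blast
  next
    assume r: ?r
    show ?l
    proof (intro allI impI)
      fix i
      assume "Suc i < length (xs @ [y])"
      then consider "Suc i < length xs" | "i = length xs - 1"
        by fastforce
      then show "E ((xs @ [y]) ! i) ((xs @ [y]) ! Suc i)"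
        by cases (use r assms in \<open>auto simp: nth_append last_conv_nth\<close>)
    qed
  qed
  then show ?thesis
    unfolding is_walk_def using assms by auto
qed

lemma sdim_eqI:
  assumes "strong_resolving_set V E R" "finite V"
    and "\<And>R'. strong_resolving_set V E R' \<Longrightarrow> card R \<le> card R'"
  shows "sdim V E = card R"
proof -
  have "{R. strong_resolving_set V E R} \<subseteq> Pow V"
    unfolding strong_resolving_set_def by blast
  then have "finite (card ` {R. strong_resolving_set V E R})"
    using assms(2) by (meson finite_Pow_iff finite_imageI finite_subset)
  then show ?thesis
    unfolding sdim_def using assms(1,3) by (intro Min_eqI) auto
qed

locale graph_distance =
  fixes V :: "'a set" and E :: "'a \<Rightarrow> 'a \<Rightarrow> bool" and D :: "'a \<Rightarrow> 'a \<Rightarrow> nat"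
  assumes finite_V: "finite V"
    and edge_sym: "E x y \<Longrightarrow> E y x"
    and dist_self: "u \<in> V \<Longrightarrow> D u u = 0"
    and dist_sym: "u \<in> V \<Longrightarrow> v \<in> V \<Longrightarrow> D u v = D v u"
    and dist_edge: "u \<in> V \<Longrightarrow> x \<in> V \<Longrightarrow> y \<in> V \<Longrightarrow> E x y \<Longrightarrow> D u y \<le> D u x + 1"
    and dist_descent: "u \<in> V \<Longrightarrow> v \<in> V \<Longrightarrow> u \<noteq> v \<Longrightarrow> \<exists>y\<in>V. E v y \<and> D u y + 1 = D u v"
begin

lemma dist_eq_0_iff: "u \<in> V \<Longrightarrow> v \<in> V \<Longrightarrow> D u v = 0 \<longleftrightarrow> u = v"
  using dist_descent dist_self by fastforce

lemma dist_triangle: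
  assumes "x \<in> V" "y \<in> V" "z \<in> V"
  shows "D x z \<le> D x y + D y z"
  using assms(3)
proof (induction "D y z" arbitrary: z)
  case 0
  then show ?case using dist_eq_0_iff assms(2) by auto
next
  case (Suc k)
  then have "y \<noteq> z" using assms(2) dist_self by auto
  then obtain z' where z': "z' \<in> V" "E z z'" "D y z' + 1 = D y z"
    using dist_descent assms(2) Suc.prems by blast
  have "D x z' \<le> D x y + D y z'" using Suc z' by auto
  moreover have "D x z \<le> D x z' + 1"
    using dist_edge[OF assms(1) z'(1) Suc.prems edge_sym[OF z'(2)]] .
  ultimately show ?case using z' by linarith
qed

lemma walk_of_length_dist:
  assumes "u \<in> V" "v \<in> V"
  shows "\<exists>xs. is_walk E V xs \<and> hd xs = u \<and> last xs = v \<and> length xs = Suc (D u v)"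
  using assms(2)
proof (induction "D u v" arbitrary: v)
  case 0
  then have "v = u" using dist_eq_0_iff assms(1) by auto
  then show ?case using assms(1) dist_self by (intro exI[of _ "[u]"]) (auto simp: is_walk_def)
next
  case (Suc k)
  then have "u \<noteq> v" using assms(1) dist_self by auto
  then obtain y where y: "y \<in> V" "E v y" "D u y + 1 = D u v"
    using dist_descent assms(1) Suc.prems by blast
  then obtain xs where xs: "is_walk E V xs" "hd xs = u" "last xs = y" "length xs = Suc k"
    using Suc.hyps(1)[of y] Suc.hyps(2) y by auto
  have "xs \<noteq> []" using xs(4) by auto
  then have "is_walk E V (xs @ [v])"
    using is_walk_snoc[OF \<open>xs \<noteq> []\<close>] xs Suc.prems y edge_sym by auto
  then show ?case using xs \<open>xs \<noteq> []\<close> Suc.hyps y(3) by (intro exI[of _ "xs @ [v]"]) auto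
qed

lemma dist_le_walk_length: "is_walk E V xs \<Longrightarrow> D (hd xs) (last xs) \<le> length xs - 1"
proof (induction xs rule: rev_induct)
  case Nil
  then show ?case by (simp add: is_walk_def)
next
  case (snoc y xs)
  show ?case
  proof (cases "xs = []")
    case True
    then show ?thesis using snoc.prems dist_self by (simp add: is_walk_def)
  next
    case False
    then have w: "is_walk E V xs" "y \<in> V" "E (last xs) y"
      using is_walk_snoc[OF False] snoc.prems by auto
    have "hd xs \<in> V" "last xs \<in> V" using w(1) False by (auto simp: is_walk_def)
    then have "D (hd xs) y \<le> D (hd xs) (last xs) + 1" using dist_edge w by blast
    moreover have "length xs > 0" using False by simp
    ultimately have "D (hd xs) y \<le> length xs" using snoc.IH[OF w(1)] by linarith
    then show ?thesis using False by simp
  qed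
qed

lemma gdist_eq: "u \<in> V \<Longrightarrow> v \<in> V \<Longrightarrow> gdist V E u v = D u v"
  unfolding gdist_def
proof (rule Least_equality)
  show "\<exists>xs. is_walk E V xs \<and> hd xs = u \<and> last xs = v \<and> length xs = Suc (D u v)"
    if "u \<in> V" "v \<in> V" using walk_of_length_dist that .
  show "D u v \<le> k" if "\<exists>xs. is_walk E V xs \<and> hd xs = u \<and> last xs = v \<and> length xs = Suc k" for k
    using that dist_le_walk_length by fastforce
qed

lemma in_interval_iff:
  "x \<in> V \<Longrightarrow> y \<in> V \<Longrightarrow> w \<in> V \<Longrightarrow> x \<in> interval V E y w \<longleftrightarrow> D y x + D x w = D y w"
  unfolding interval_def using gdist_eq by auto

lemma maximally_distant_iff:
  "u \<in> V \<Longrightarrow> v \<in> V \<Longrightarrow> maximally_distant V E u v \<longleftrightarrow> (\<forall>w\<in>V. E v w \<longrightarrow> D u w \<le> D u v)"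
  unfolding maximally_distant_def using gdist_eq by auto

lemma maximally_distant_not_between:
  assumes "u \<in> V" "v \<in> V" "w \<in> V" "maximally_distant V E u v" "w \<noteq> v"
  shows "D u v + D v w \<noteq> D u w"
proof
  assume geodesic: "D u v + D v w = D u w"
  obtain y where y: "y \<in> V" "E v y" "D w y + 1 = D w v"
    using dist_descent assms(2,3,5) by metis
  have "D u w \<le> D u y + D y w" using dist_triangle assms(1,3) y(1) by blast
  moreover have "D u y \<le> D u v" using assms(1,2,4) y(1,2) maximally_distant_iff by blast
  ultimately show False using geodesic y(3) dist_sym assms(2,3) y(1) by fastforce
qed

lemma strongly_resolves_mutually_maximally_distant:
  assumes "u \<in> V" "v \<in> V" "w \<in> V" "mutually_maximally_distant V E u v"
    and "strongly_resolves V E w u v"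
  shows "w = u \<or> w = v"
  using assms maximally_distant_not_between[of u v w] maximally_distant_not_between[of v u w]
  unfolding mutually_maximally_distant_def strongly_resolves_def
  by (auto simp: in_interval_iff dist_sym)

lemma maximally_distant_end_of_longest_geodesic:
  assumes V: "a \<in> V" "b \<in> V" "u \<in> V" "v \<in> V"
    and geodesic: "D a b = D a u + D u v + D v b"
    and longest: "\<And>a'. a' \<in> V \<Longrightarrow> D a' b = D a' u + D u v + D v b \<Longrightarrow> D a' b \<le> D a b"
  shows "maximally_distant V E b a"
proof -
  have "D b a' \<le> D b a" if a': "a' \<in> V" "E a a'" for a'
  proof (rule ccontr)
    assume "\<not> D b a' \<le> D b a"
    then have longer: "D a' b = D a b + 1"
      using dist_edge[of b a a'] a' V dist_sym by fastforce
    have "D a' b \<le> D a' u + D u b" "D u b \<le> D u v + D v b"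
      using dist_triangle a'(1) V by blast+
    moreover have "D u a' \<le> D u a + 1" using dist_edge a' V by blast
    ultimately have "D a' b = D a' u + D u v + D v b"
      using geodesic longer dist_sym a'(1) V by fastforce
    then show False using longest[OF a'(1)] longer by simp
  qed
  then show ?thesis using maximally_distant_iff V by blast
qed

lemma exists_mutually_maximally_distant_geodesic_extension:
  assumes "u \<in> V" "v \<in> V"
  shows "\<exists>a\<in>V. \<exists>b\<in>V. mutually_maximally_distant V E a b \<and> D a b = D a u + D u v + D v b"
proof -
  define S where "S = {(a, b) \<in> V \<times> V. D a b = D a u + D u v + D v b}"
  have "finite S" unfolding S_def using finite_V by (auto intro: finite_subset)
  moreover have "(u, v) \<in> S" unfolding S_def using assms dist_self by simp
  ultimately obtain a b where ab: "(a, b) \<in> S" "D a b = Max (case_prod D ` S)"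
    using Max_in[of "case_prod D ` S"] by fastforce
  have longest: "D a' b' \<le> D a b" if "(a', b') \<in> S" for a' b'
    using Max_ge[of "case_prod D ` S"] \<open>finite S\<close> that ab(2) by fastforce
  have V: "a \<in> V" "b \<in> V" and geodesic: "D a b = D a u + D u v + D v b"
    using ab(1) unfolding S_def by auto
  have "maximally_distant V E b a"
  proof (rule maximally_distant_end_of_longest_geodesic)
    show "D a' b \<le> D a b" if "a' \<in> V" "D a' b = D a' u + D u v + D v b" for a'
      using longest[of a' b] that V unfolding S_def by simp
  qed (use V assms geodesic in auto)
  moreover have "maximally_distant V E a b"
  proof (rule maximally_distant_end_of_longest_geodesic)
    show "D b a = D b v + D v u + D u a" using geodesic dist_sym V assms by simp
    show "D b' a \<le> D b a" if "b' \<in> V" "D b' a = D b' v + D v u + D u a" for b'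
      using longest[of a b'] that V assms dist_sym unfolding S_def by simp
  qed (use V assms in auto)
  ultimately show ?thesis using V geodesic unfolding mutually_maximally_distant_def by blast
qed

theorem strong_resolving_set_iff_covers_mutually_maximally_distant:
  "strong_resolving_set V E R \<longleftrightarrow>
     R \<subseteq> V \<and> (\<forall>a\<in>V. \<forall>b\<in>V. a \<noteq> b \<longrightarrow> mutually_maximally_distant V E a b \<longrightarrow> a \<in> R \<or> b \<in> R)"
  (is "_ \<longleftrightarrow> ?covers")
proof
  assume "strong_resolving_set V E R"
  then show ?covers
    unfolding strong_resolving_set_def using strongly_resolves_mutually_maximally_distant by blast
next
  assume R: ?covers
  have "\<exists>w\<in>R. strongly_resolves V E w u v" if uv: "u \<in> V" "v \<in> V" "u \<noteq> v" for u v
  proof -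
    obtain a b where ab: "a \<in> V" "b \<in> V" "mutually_maximally_distant V E a b"
      and geodesic: "D a b = D a u + D u v + D v b"
      using exists_mutually_maximally_distant_geodesic_extension uv(1,2) by blast
    have "D u v > 0" using dist_eq_0_iff uv by auto
    then have "a \<noteq> b" using geodesic dist_self ab(1) by auto
    have "D a b \<le> D a v + D v b" "D a v \<le> D a u + D u v"
      "D a b \<le> D a u + D u b" "D u b \<le> D u v + D v b"
      using dist_triangle ab(1,2) uv(1,2) by blast+
    moreover have "D v u = D u v" "D u a = D a u" "D v a = D a v"
      using dist_sym ab(1) uv(1,2) by auto
    ultimately have "D v u + D u a = D v a" "D u v + D v b = D u b"
      using geodesic by linarith+
    then have "strongly_resolves V E a u v" "strongly_resolves V E b u v"
      unfolding strongly_resolves_def using in_interval_iff ab(1,2) uv(1,2) by blast+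
    then show ?thesis using R ab \<open>a \<noteq> b\<close> by blast
  qed
  then show "strong_resolving_set V E R" unfolding strong_resolving_set_def using R by blast
qed

corollary strong_resolving_set_meets_mutually_maximally_distant:
  assumes "strong_resolving_set V E R" "a \<in> V" "b \<in> V" "a \<noteq> b"
    and "mutually_maximally_distant V E a b"
  shows "a \<in> R \<or> b \<in> R"
  using assms strong_resolving_set_iff_covers_mutually_maximally_distant by blast

end

section \<open>The cube as the 3-cube\<close>

fun hamming3 :: "bool \<times> bool \<times> bool \<Rightarrow> bool \<times> bool \<times> bool \<Rightarrow> nat" where
  "hamming3 (x0, x1, x2) (y0, y1, y2) = of_bool (x0 \<noteq> y0) + of_bool (x1 \<noteq> y1) + of_bool (x2 \<noteq> y2)"

lemma hamming3_sym: "hamming3 x y = hamming3 y x"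
  by (cases x; cases y) auto

lemma hamming3_self [simp]: "hamming3 x x = 0"
  by (cases x) auto

lemma hamming3_triangle: "hamming3 x y \<le> hamming3 x z + hamming3 z y"
  by (cases x; cases y; cases z) auto

lemma hamming3_le_3: "hamming3 x y \<le> 3"
  by (cases x; cases y) auto

lemma hamming3_step_closer:
  assumes "x \<noteq> y"
  shows "\<exists>z. hamming3 y z = 1 \<and> hamming3 x z + 1 = hamming3 x y"
proof -
  obtain x0 x1 x2 y0 y1 y2 where xy: "x = (x0, x1, x2)" "y = (y0, y1, y2)"
    by (cases x; cases y)
  let ?z = "if x0 \<noteq> y0 then (x0, y1, y2) else if x1 \<noteq> y1 then (y0, x1, y2) else (y0, y1, x2)"
  show ?thesis
    using assms by (intro exI[of _ ?z]) (auto simp: xy)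
qed

lemma hamming3_step_farther:
  assumes "hamming3 x y < 3"
  shows "\<exists>z. hamming3 y z = 1 \<and> hamming3 x z = hamming3 x y + 1"
proof -
  obtain x0 x1 x2 y0 y1 y2 where xy: "x = (x0, x1, x2)" "y = (y0, y1, y2)"
    by (cases x; cases y)
  let ?z = "if x0 = y0 then (\<not> y0, y1, y2) else if x1 = y1 then (y0, \<not> y1, y2) else (y0, y1, \<not> y2)"
  show ?thesis
    using assms by (intro exI[of _ ?z]) (auto simp: xy)
qed

definition cube_coords :: "nat \<Rightarrow> bool \<times> bool \<times> bool" where
  "cube_coords a = (a \<in> {2, 3, 6, 7}, a \<in> {3, 4, 7, 8}, a \<in> {5, 6, 7, 8})"

definition cube_dist :: "nat \<Rightarrow> nat \<Rightarrow> nat" where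
  "cube_dist a b = hamming3 (cube_coords a) (cube_coords b)"

lemma cube_label_cases:
  assumes "(a::nat) \<in> {1..8}"
  obtains "a = 1" | "a = 2" | "a = 3" | "a = 4" | "a = 5" | "a = 6" | "a = 7" | "a = 8"
  using assms by fastforce

lemma cube_coords_inj: "a \<in> {1..8} \<Longrightarrow> b \<in> {1..8} \<Longrightarrow> cube_coords a = cube_coords b \<Longrightarrow> a = b"
  by (elim cube_label_cases) (simp_all add: cube_coords_def)

lemma cube_coords_surj: "\<exists>c\<in>{1..8}. cube_coords c = x"
proof -
  have "\<exists>c\<in>{1, 2, 3, 4, 5, 6, 7, 8}. cube_coords c = x"
    by (cases x) (auto simp: cube_coords_def)
  then show ?thesis by auto
qed

lemma cube_dist_sym: "cube_dist a b = cube_dist b a"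
  unfolding cube_dist_def by (rule hamming3_sym)

lemma cube_dist_self [simp]: "cube_dist a a = 0"
  unfolding cube_dist_def by simp

lemma cube_dist_triangle: "cube_dist a b \<le> cube_dist a c + cube_dist c b"
  unfolding cube_dist_def by (rule hamming3_triangle)

lemma cube_dist_le_3: "cube_dist a b \<le> 3"
  unfolding cube_dist_def by (rule hamming3_le_3)

lemma cube_adj_iff_dist:
  "cube_adj a b \<longleftrightarrow> a \<in> {1..8} \<and> b \<in> {1..8} \<and> cube_dist a b = 1"
proof (cases "a \<in> {1..8} \<and> b \<in> {1..8}")
  case True
  then show ?thesis
    by (elim conjE cube_label_cases)
      (simp_all add: cube_adj_def cube_dist_def cube_coords_def doubleton_eq_iff)
next
  case False
  then show ?thesis by (auto simp: cube_adj_def doubleton_eq_iff)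
qed

lemma cube_adj_sym: "cube_adj a b \<Longrightarrow> cube_adj b a"
  unfolding cube_adj_iff_dist using cube_dist_sym by auto

lemma cube_step_closer:
  assumes "a \<in> {1..8}" "b \<in> {1..8}" "a \<noteq> b"
  shows "\<exists>c. cube_adj b c \<and> cube_dist a c + 1 = cube_dist a b"
proof -
  obtain z where z: "hamming3 (cube_coords b) z = 1"
    "hamming3 (cube_coords a) z + 1 = cube_dist a b"
    using hamming3_step_closer[of "cube_coords a" "cube_coords b"] cube_coords_inj assms
    unfolding cube_dist_def by blast
  obtain c where "c \<in> {1..8}" "cube_coords c = z" using cube_coords_surj by blast
  with z assms(2) show ?thesis by (auto simp: cube_adj_iff_dist cube_dist_def)
qed

lemma cube_step_farther:
  assumes "b \<in> {1..8}" "cube_dist a b < 3"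
  shows "\<exists>c. cube_adj b c \<and> cube_dist a c = cube_dist a b + 1"
proof -
  obtain z where z: "hamming3 (cube_coords b) z = 1"
    "hamming3 (cube_coords a) z = cube_dist a b + 1"
    using hamming3_step_farther[of "cube_coords a" "cube_coords b"] assms
    unfolding cube_dist_def by blast
  obtain c where "c \<in> {1..8}" "cube_coords c = z" using cube_coords_surj by blast
  with z assms(1) show ?thesis by (auto simp: cube_adj_iff_dist cube_dist_def)
qed

definition cube_antipode :: "nat \<Rightarrow> nat" where
  "cube_antipode a = [7, 8, 5, 6, 3, 4, 1, 2] ! (a - 1)"

lemma cube_dist_eq_3_iff:
  "a \<in> {1..8} \<Longrightarrow> b \<in> {1..8} \<Longrightarrow> cube_dist a b = 3 \<longleftrightarrow> b = cube_antipode a"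
  by (elim cube_label_cases) (simp_all add: cube_dist_def cube_coords_def cube_antipode_def)

lemma cube_antipode_of_low_label:
  assumes "a \<in> {2, 3, 4}"
  shows "a \<in> {1..8}" "cube_antipode a \<in> {1..8}" "cube_dist a (cube_antipode a) = 3"
    and "a \<noteq> 1" "cube_antipode a \<noteq> 1"
    and "a \<in> {2, 3, 4, 5, 6, 8}" "cube_antipode a \<in> {2, 3, 4, 5, 6, 8}"
  using assms by (elim insertE emptyE; simp add: cube_antipode_def cube_dist_def cube_coords_def)+

section \<open>Distances in CCC(n)\<close>

(* The vertex p @ xs lies climb xs steps below the vertex p. *)
definition climb :: "nat list \<Rightarrow> nat" where
  "climb xs = (\<Sum>a\<leftarrow>xs. cube_dist 1 a + 1)"

lemma climb_simps [simp]:
  "climb [] = 0" "climb (a # xs) = cube_dist 1 a + 1 + climb xs"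
  "climb (xs @ ys) = climb xs + climb ys"
  unfolding climb_def by auto

(*
  Two vertices agree up to the cube in which they carry the labels x and y; unless one lies
  below the other, a geodesic climbs from one of them into that cube, crosses it and descends
  to the other.
*)
fun ccc_dist :: "nat list \<Rightarrow> nat list \<Rightarrow> nat" where
  "ccc_dist (x # xs) (y # ys) =
     (if x = y \<and> xs \<noteq> [] \<and> ys \<noteq> [] then ccc_dist xs ys else climb xs + cube_dist x y + climb ys)"
| "ccc_dist _ _ = 0"

lemma ccc_dist_sym: "ccc_dist x y = ccc_dist y x"
  by (induction x y rule: ccc_dist.induct) (auto simp: cube_dist_sym)

lemma ccc_dist_self [simp]: "ccc_dist x x = 0"
  by (induction x) auto

lemma ccc_dist_append_prefix: "x \<noteq> [] \<Longrightarrow> y \<noteq> [] \<Longrightarrow> ccc_dist (p @ x) (p @ y) = ccc_dist x y"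
  by (induction p) auto

lemma branch_decomposition:
  assumes "x \<noteq> []" "y \<noteq> []"
  obtains p a b us vs where "x = p @ a # us" "y = p @ b # vs" "\<not> (a = b \<and> us \<noteq> [] \<and> vs \<noteq> [])"
  using assms
proof (induction x arbitrary: y thesis)
  case Nil
  then show ?case by simp
next
  case (Cons a us)
  obtain b vs where y: "y = b # vs" using Cons.prems(3) by (cases y) auto
  show ?case
  proof (cases "a = b \<and> us \<noteq> [] \<and> vs \<noteq> []")
    case True
    then obtain p a' b' us' vs' where "us = p @ a' # us'" "vs = p @ b' # vs'"
      "\<not> (a' = b' \<and> us' \<noteq> [] \<and> vs' \<noteq> [])"
      using Cons.IH[of vs] by blast
    then show ?thesis using Cons.prems(1) y True by (metis append_Cons)
  next
    case False
    then show ?thesis using Cons.prems(1)[of "[]"] y by simp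
  qed
qed

lemma ccc_dist_branch:
  assumes "\<not> (a = b \<and> us \<noteq> [] \<and> vs \<noteq> [])"
  shows "ccc_dist (p @ a # us) (p @ b # vs) = climb us + cube_dist a b + climb vs"
proof -
  have "ccc_dist (p @ a # us) (p @ b # vs) = ccc_dist (a # us) (b # vs)"
    by (rule ccc_dist_append_prefix) auto
  then show ?thesis using assms by simp
qed

lemma ccc_dist_snoc_relabel: "ccc_dist u (s @ [a]) \<le> ccc_dist u (s @ [b]) + cube_dist a b"
proof (induction s arbitrary: u)
  case Nil
  then show ?case
    using cube_dist_triangle[of _ a b] cube_dist_triangle[of 1 a b] cube_dist_sym
    by (cases u) (auto simp: add.commute)
next
  case (Cons x s)
  then show ?case
    using cube_dist_triangle[of 1 a b] cube_dist_sym[of a b] by (cases u) auto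
qed

lemma ccc_dist_snoc_head:
  assumes "x \<noteq> []"
  shows "ccc_dist u (x @ [1]) \<le> ccc_dist u x + 1 \<and> ccc_dist u x \<le> ccc_dist u (x @ [1]) + 1"
  using assms
proof (induction u arbitrary: x)
  case Nil
  then show ?case by simp
next
  case (Cons u0 us)
  then obtain x0 xs where x: "x = x0 # xs" by (cases x) auto
  show ?case
  proof (cases "u0 = x0 \<and> us \<noteq> [] \<and> xs \<noteq> []")
    case True
    then show ?thesis using Cons.IH[of xs] x by auto
  next
    case False
    then show ?thesis using x by (cases us) (auto simp: cube_dist_sym)
  qed
qed

lemma ccc_dist_snoc_outside:
  assumes "s \<noteq> []" "p \<noteq> []" "\<not> (\<exists>c z. p = s @ c # z)"
  shows "ccc_dist p (s @ [c]) = ccc_dist p s + cube_dist 1 c + 1"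
  using assms
proof (induction s arbitrary: p)
  case Nil
  then show ?case by simp
next
  case (Cons s0 ss)
  obtain p0 ps where p: "p = p0 # ps" using Cons.prems(2) by (cases p) auto
  show ?case
  proof (cases "p0 = s0 \<and> ps \<noteq> [] \<and> ss \<noteq> []")
    case True
    then show ?thesis using Cons.IH[of ps] Cons.prems(3) p by auto
  next
    case False
    moreover have "ps = []" if "p0 = s0" "ss = []" using Cons.prems(3) p that by (cases ps) auto
    ultimately show ?thesis using p by auto
  qed
qed

lemma set_butlast_tl_conv_nth:
  "x \<in> set (butlast (tl xs)) \<longleftrightarrow> (\<exists>i. 0 < i \<and> Suc i < length xs \<and> xs ! i = x)"
proof
  assume "x \<in> set (butlast (tl xs))"
  then obtain j where "j < length (butlast (tl xs))" "butlast (tl xs) ! j = x"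
    by (auto simp: in_set_conv_nth)
  then show "\<exists>i. 0 < i \<and> Suc i < length xs \<and> xs ! i = x"
    by (intro exI[of _ "Suc j"]) (cases xs, auto simp: nth_butlast)
next
  assume "\<exists>i. 0 < i \<and> Suc i < length xs \<and> xs ! i = x"
  then obtain j where "Suc (Suc j) < length xs" "xs ! Suc j = x"
    using gr0_conv_Suc by auto
  then show "x \<in> set (butlast (tl xs))"
    by (cases xs) (auto simp: in_set_conv_nth nth_butlast intro!: exI[of _ j])
qed

lemma CCC_V_iff:
  "xs \<in> CCC_V n \<longleftrightarrow> xs \<noteq> [] \<and> length xs \<le> n \<and> set xs \<subseteq> {1..8} \<and> 1 \<notin> set (butlast (tl xs))"
  unfolding CCC_V_def set_butlast_tl_conv_nth by (cases xs) auto

lemma CCC_V_snoc_iff: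
  "s @ [a] \<in> CCC_V n \<longleftrightarrow> length s < n \<and> set s \<subseteq> {1..8} \<and> a \<in> {1..8} \<and> 1 \<notin> set (tl s)"
proof -
  have "butlast (tl (s @ [a])) = tl s" by (cases s) auto
  then show ?thesis unfolding CCC_V_iff by auto
qed

lemma finite_CCC_V: "finite (CCC_V n)"
proof -
  have "CCC_V n \<subseteq> {xs. set xs \<subseteq> {1..8} \<and> length xs \<le> n}"
    by (intro subsetI) (simp add: CCC_V_iff)
  then show ?thesis using finite_lists_length_le[of "{1..8::nat}"] finite_subset by blast
qed

lemma CCC_E_sym: "CCC_E x y \<Longrightarrow> CCC_E y x"
  unfolding CCC_E_def by blast

lemma ccc_cube_edge:
  assumes "s @ [a] \<in> CCC_V n" "cube_adj a b"
  shows "s @ [b] \<in> CCC_V n \<and> CCC_E (s @ [a]) (s @ [b])"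
  using assms cube_adj_iff_dist[of a b] unfolding CCC_V_snoc_iff CCC_E_def CCC_E0_def by auto

lemma ccc_up_edge:
  assumes "s \<noteq> []" "s @ [1] \<in> CCC_V n"
  shows "s \<in> CCC_V n \<and> CCC_E (s @ [1]) s"
proof -
  have "1 \<notin> set (tl s)" using assms(2) unfolding CCC_V_snoc_iff by auto
  moreover have "length s = 1 \<or> last s \<in> set (tl s)" using assms(1) by (cases s) auto
  ultimately show ?thesis using assms
    unfolding CCC_V_iff CCC_V_snoc_iff CCC_E_def CCC_E0_def by (auto dest: in_set_butlastD)
qed

lemma ccc_down_edge:
  assumes "s \<in> CCC_V n" "length s < n" "length s = 1 \<or> last s \<noteq> 1"
  shows "s @ [1] \<in> CCC_V n \<and> CCC_E s (s @ [1])"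
proof -
  have "1 \<notin> set (tl s)"
  proof (cases "length s = 1")
    case True
    then show ?thesis by (cases s) auto
  next
    case False
    then have split: "tl s = butlast (tl s) @ [last s]" and "last s \<noteq> 1"
      using assms(1,3) by (cases s, auto simp: CCC_V_iff)+
    have "set (tl s) = set (butlast (tl s) @ [last s])" by (rule arg_cong[OF split])
    moreover have "1 \<notin> set (butlast (tl s))" using assms(1) by (simp add: CCC_V_iff)
    ultimately show ?thesis using \<open>last s \<noteq> 1\<close> by simp
  qed
  then show ?thesis using assms unfolding CCC_V_iff CCC_V_snoc_iff CCC_E_def CCC_E0_def by auto
qed

lemma ccc_dist_edge:
  assumes "CCC_E x y"
  shows "ccc_dist u y \<le> ccc_dist u x + 1"
proof -
  have "ccc_dist u y \<le> ccc_dist u x + 1 \<and> ccc_dist u x \<le> ccc_dist u y + 1" if "CCC_E0 x y" for x y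
  proof -
    from that consider (cube) "x \<noteq> []" "y \<noteq> []" "butlast x = butlast y" "cube_adj (last x) (last y)"
      | (down) "x \<noteq> []" "y = x @ [1]"
      unfolding CCC_E0_def by blast
    then show ?thesis
    proof cases
      case cube
      then have "x = butlast x @ [last x]" "y = butlast x @ [last y]"
        by (metis append_butlast_last_id)+
      then show ?thesis
        using ccc_dist_snoc_relabel[of u "butlast x" "last x" "last y"]
          ccc_dist_snoc_relabel[of u "butlast x" "last y" "last x"]
          cube(4) cube_adj_iff_dist cube_dist_sym by (metis add.commute)
    next
      case down
      then show ?thesis using ccc_dist_snoc_head by blast
    qed
  qed
  then show ?thesis using assms unfolding CCC_E_def by blast
qed

lemma climb_decreasing_neighbour:
  assumes "q @ vs \<in> CCC_V n" "q \<noteq> []" "vs \<noteq> []"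
  obtains vs' where "q @ vs' \<in> CCC_V n" "CCC_E (q @ vs) (q @ vs')" "climb vs' + 1 = climb vs"
proof -
  obtain ws l where vs: "vs = ws @ [l]" using assms(3) by (metis rev_exhaust)
  have l: "l \<in> {1..8}" using assms(1) unfolding vs CCC_V_iff by auto
  show ?thesis
  proof (cases "l = 1")
    case True
    have "q @ ws \<noteq> []" using assms(2) by simp
    then show ?thesis
      using ccc_up_edge[of "q @ ws" n] assms(1) that[of ws] unfolding vs True by simp
  next
    case False
    then obtain c where "cube_adj l c" "cube_dist 1 c + 1 = cube_dist 1 l"
      using cube_step_closer[of 1 l] l by auto
    then show ?thesis
      using ccc_cube_edge[of "q @ ws" l n c] assms(1) that[of "ws @ [c]"] unfolding vs by simp
  qed
qed

lemma climb_increasing_neighbour: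
  assumes "q @ us \<in> CCC_V n" "us \<noteq> []" "length (q @ us) = n \<longrightarrow> last us \<noteq> 7"
  obtains us' where "q @ us' \<in> CCC_V n" "CCC_E (q @ us) (q @ us')" "climb us' = climb us + 1"
proof -
  obtain ws l where us: "us = ws @ [l]" using assms(2) by (metis rev_exhaust)
  have l: "l \<in> {1..8}" using assms(1) unfolding us CCC_V_iff by auto
  show ?thesis
  proof (cases "l = 7")
    case True
    then have "length (q @ us) < n" using assms(1,3) unfolding us CCC_V_iff by auto
    then show ?thesis
      using ccc_down_edge[of "q @ us" n] assms(1) that[of "us @ [1]"] unfolding us True by simp
  next
    case False
    have "cube_antipode 1 = 7" by (simp add: cube_antipode_def)
    then have "cube_dist 1 l < 3"
      using False l cube_dist_eq_3_iff[of 1 l] cube_dist_le_3[of 1 l] by simp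
    then obtain c where "cube_adj l c" "cube_dist 1 c = cube_dist 1 l + 1"
      using cube_step_farther l by blast
    then show ?thesis
      using ccc_cube_edge[of "q @ ws" l n c] assms(1) that[of "ws @ [c]"] unfolding us by simp
  qed
qed

lemma ccc_down_towards_descendant:
  assumes "v @ us \<in> CCC_V n" "v \<noteq> []" "us \<noteq> []"
  shows "v @ [1] \<in> CCC_V n \<and> CCC_E v (v @ [1]) \<and>
    ccc_dist (v @ us) (v @ [1]) + 1 = ccc_dist (v @ us) v"
proof -
  have "butlast (tl (v @ us)) = tl v @ butlast us" using assms(2,3) by (simp add: butlast_append)
  then have inner: "1 \<notin> set (tl v)" using assms(1) by (simp add: CCC_V_iff)
  have "length (v @ us) \<le> n" "set v \<subseteq> {1..8}" using assms(1) by (auto simp: CCC_V_iff)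
  then have "length v < n" "set v \<subseteq> {1..8}" using assms(3) by (cases us, auto)
  with inner have "v \<in> CCC_V n" using assms(2) by (auto simp: CCC_V_iff dest: in_set_butlastD)
  moreover have "length v = 1 \<or> last v \<noteq> 1"
    using inner assms(2) by (cases v) (auto dest: last_in_set)
  ultimately have edge: "v @ [1] \<in> CCC_V n \<and> CCC_E v (v @ [1])"
    using ccc_down_edge \<open>length v < n\<close> by blast
  obtain p b where v: "v = p @ [b]" using assms(2) by (metis rev_exhaust)
  obtain h t where us: "us = h # t" using assms(3) by (cases us) auto
  have "ccc_dist (v @ us) (v @ [1]) = ccc_dist (b # us) [b, 1]"
    unfolding v using ccc_dist_append_prefix[of "b # us" "[b, 1]" p] by simp
  moreover have "ccc_dist (v @ us) v = ccc_dist (b # us) [b]"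
    unfolding v using ccc_dist_append_prefix[of "b # us" "[b]" p] by simp
  ultimately show ?thesis using edge unfolding us by (simp add: cube_dist_sym)
qed

lemma ccc_dist_descent:
  assumes "u \<in> CCC_V n" "v \<in> CCC_V n" "u \<noteq> v"
  shows "\<exists>y\<in>CCC_V n. CCC_E v y \<and> ccc_dist u y + 1 = ccc_dist u v"
proof -
  obtain p a b us vs where u: "u = p @ a # us" and v: "v = p @ b # vs"
    and branch: "\<not> (a = b \<and> us \<noteq> [] \<and> vs \<noteq> [])"
    using branch_decomposition assms(1,2) unfolding CCC_V_iff by metis
  have dist: "ccc_dist u v = climb us + cube_dist a b + climb vs"
    unfolding u v using branch by (rule ccc_dist_branch)
  consider (climb) "vs \<noteq> []" | (cube) "vs = []" "a \<noteq> b" | (descend) "vs = []" "a = b" by blast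
  then show ?thesis
  proof cases
    case climb
    then obtain vs' where "(p @ [b]) @ vs' \<in> CCC_V n" "CCC_E v ((p @ [b]) @ vs')"
      "climb vs' + 1 = climb vs"
      using climb_decreasing_neighbour[of "p @ [b]" vs n] assms(2) unfolding v by auto
    moreover have "ccc_dist u (p @ b # vs') = climb us + cube_dist a b + climb vs'"
      unfolding u using branch climb by (intro ccc_dist_branch) auto
    ultimately show ?thesis using dist by (intro bexI[of _ "p @ b # vs'"]) auto
  next
    case cube
    have "a \<in> {1..8}" "b \<in> {1..8}" using assms(1,2) unfolding u v CCC_V_iff by auto
    then obtain c where "cube_adj b c" "cube_dist a c + 1 = cube_dist a b"
      using cube_step_closer cube(2) by blast
    moreover have "ccc_dist u (p @ [c]) = climb us + cube_dist a c"
      unfolding u using ccc_dist_branch[of a c us "[]" p] by simp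
    ultimately show ?thesis using ccc_cube_edge[of p b n c] assms(2) dist cube(1)
      unfolding v by (intro bexI[of _ "p @ [c]"]) auto
  next
    case descend
    then have "us \<noteq> []" using assms(3) u v by auto
    then show ?thesis
      using ccc_down_towards_descendant[of v us n] assms(1) descend unfolding u v by auto
  qed
qed

interpretation ccc: graph_distance "CCC_V n" CCC_E ccc_dist for n
proof
  show "finite (CCC_V n)" by (rule finite_CCC_V)
  show "CCC_E x y \<Longrightarrow> CCC_E y x" for x y by (rule CCC_E_sym)
  show "ccc_dist u u = 0" for u by simp
  show "ccc_dist u v = ccc_dist v u" for u v by (rule ccc_dist_sym)
  show "CCC_E x y \<Longrightarrow> ccc_dist u y \<le> ccc_dist u x + 1" for u x y by (rule ccc_dist_edge)
  show "u \<in> CCC_V n \<Longrightarrow> v \<in> CCC_V n \<Longrightarrow> u \<noteq> v \<Longrightarrow>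
      \<exists>y\<in>CCC_V n. CCC_E v y \<and> ccc_dist u y + 1 = ccc_dist u v" for u v
    by (rule ccc_dist_descent)
qed

definition far_leaf :: "nat \<Rightarrow> nat list \<Rightarrow> nat list \<Rightarrow> bool" where
  "far_leaf n v u \<longleftrightarrow> length u = n \<and>
     (last u = 7 \<or> (butlast u = butlast v \<and> cube_dist (last u) (last v) = 3 \<and> last u \<noteq> 1))"

(* The head of a cube is left upwards, any other vertex downwards into its own child cube. *)
lemma ccc_ascent_from_antipode:
  assumes "n \<ge> 2" "p @ a # vs \<in> CCC_V n" "p @ [b] \<in> CCC_V n" "cube_dist a b = 3"
    and "\<not> (length p + 1 = n \<and> vs = [] \<and> b \<noteq> 1)"
  shows "\<exists>u'\<in>CCC_V n. CCC_E (p @ [b]) u' \<and>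
    ccc_dist (p @ a # vs) u' = ccc_dist (p @ a # vs) (p @ [b]) + 1"
proof -
  have "a \<noteq> b" using assms(4) by auto
  then have dist: "ccc_dist (p @ a # vs) (p @ [b]) = climb vs + 3"
    using ccc_dist_branch[of a b vs "[]" p] assms(4) by simp
  show ?thesis
  proof (cases "b = 1 \<and> p \<noteq> []")
    case True
    then obtain p' z where p: "p = p' @ [z]" by (metis rev_exhaust)
    have "ccc_dist (p @ a # vs) p = ccc_dist (z # a # vs) [z]"
      unfolding p using ccc_dist_append_prefix[of "z # a # vs" "[z]" p'] by simp
    also have "\<dots> = climb vs + 4" using assms(4) True by (simp add: cube_dist_sym)
    finally show ?thesis using ccc_up_edge[of p n] True assms(3) dist by auto
  next
    case False
    have "length (p @ a # vs) \<le> n" "length (p @ [b]) \<le> n" using assms(2,3) by (auto simp: CCC_V_iff)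
    then have "length (p @ [b]) < n" using assms(1,5) False by (cases p; cases vs) auto
    moreover have "length (p @ [b]) = 1 \<or> last (p @ [b]) \<noteq> 1" using False by auto
    ultimately have "p @ [b] @ [1] \<in> CCC_V n \<and> CCC_E (p @ [b]) (p @ [b] @ [1])"
      using ccc_down_edge assms(3) by fastforce
    moreover have "ccc_dist (p @ a # vs) (p @ b # [1]) = climb vs + 4"
      using ccc_dist_branch[of a b vs "[1]" p] assms(4) \<open>a \<noteq> b\<close> by simp
    ultimately show ?thesis using dist by auto
  qed
qed

lemma ccc_dist_ascent:
  assumes "n \<ge> 2" "u \<in> CCC_V n" "v \<in> CCC_V n" "\<not> far_leaf n v u"
  shows "\<exists>u'\<in>CCC_V n. CCC_E u u' \<and> ccc_dist v u' = ccc_dist v u + 1"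
proof -
  obtain p a b vs us where v: "v = p @ a # vs" and u: "u = p @ b # us"
    and branch: "\<not> (a = b \<and> vs \<noteq> [] \<and> us \<noteq> [])"
    using branch_decomposition assms(2,3) unfolding CCC_V_iff by metis
  have dist: "ccc_dist v u = climb vs + cube_dist a b + climb us"
    unfolding u v using branch by (rule ccc_dist_branch)
  consider (climb) "us \<noteq> []" | (cube) "us = []" "cube_dist a b < 3"
    | (antipode) "us = []" "cube_dist a b = 3"
    using cube_dist_le_3 le_neq_implies_less by blast
  then show ?thesis
  proof cases
    case climb
    then have "length ((p @ [b]) @ us) = n \<longrightarrow> last us \<noteq> 7"
      using assms(4) unfolding u far_leaf_def by auto
    then obtain us' where "(p @ [b]) @ us' \<in> CCC_V n" "CCC_E u ((p @ [b]) @ us')"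
      "climb us' = climb us + 1"
      using climb_increasing_neighbour[of "p @ [b]" us n] assms(2) climb unfolding u by auto
    moreover have "ccc_dist v (p @ b # us') = climb vs + cube_dist a b + climb us'"
      unfolding v using branch climb by (intro ccc_dist_branch) auto
    ultimately show ?thesis using dist by (intro bexI[of _ "p @ b # us'"]) auto
  next
    case cube
    have "b \<in> {1..8}" using assms(2) unfolding u CCC_V_iff by auto
    then obtain c where "cube_adj b c" "cube_dist a c = cube_dist a b + 1"
      using cube_step_farther cube(2) by blast
    moreover have "ccc_dist v (p @ [c]) = climb vs + cube_dist a c"
      unfolding v using ccc_dist_branch[of a c vs "[]" p] by simp
    ultimately show ?thesis using ccc_cube_edge[of p b n c] assms(2) dist cube(1)
      unfolding u by (intro bexI[of _ "p @ [c]"]) auto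
  next
    case antipode
    have "\<not> (length p + 1 = n \<and> vs = [] \<and> b \<noteq> 1)"
      using assms(4) antipode unfolding u v far_leaf_def by (auto simp: cube_dist_sym)
    then show ?thesis
      using ccc_ascent_from_antipode[of n p a vs b] assms(1-3) antipode dist unfolding u v by simp
  qed
qed

lemma maximally_distant_far_leaf:
  assumes "n \<ge> 2" "u \<in> CCC_V n" "v \<in> CCC_V n" "maximally_distant (CCC_V n) CCC_E v u"
  shows "far_leaf n v u"
  using ccc_dist_ascent[OF assms(1-3)] assms(2-4) ccc.maximally_distant_iff by fastforce

section \<open>Leaf cubes and the strong metric dimension\<close>

(* A cube of the last layer is named by the path s leading to it; its vertices are s @ [a]. *)
definition leaf_cubes :: "nat \<Rightarrow> nat list set" where
  "leaf_cubes n = {s. length s = n - 1 \<and> set s \<subseteq> {1..8} \<and> 1 \<notin> set (tl s)}"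

definition leaves :: "nat \<Rightarrow> nat set \<Rightarrow> nat list set" where
  "leaves n A = (\<lambda>(s, a). s @ [a]) ` (leaf_cubes n \<times> A)"

lemma finite_leaf_cubes: "finite (leaf_cubes n)"
proof -
  have "leaf_cubes n \<subseteq> {s. set s \<subseteq> {1..8} \<and> length s = n - 1}" unfolding leaf_cubes_def by auto
  then show ?thesis using finite_lists_length_eq[of "{1..8::nat}"] finite_subset by blast
qed

lemma card_leaf_cubes:
  assumes "n \<ge> 2"
  shows "card (leaf_cubes n) = 8 * 7 ^ (n - 2)"
proof -
  have "leaf_cubes n = (\<lambda>(r, cs). r # cs) ` ({1..8} \<times> {cs. set cs \<subseteq> {2..8} \<and> length cs = n - 2})"
  proof (intro set_eqI iffI)
    fix s assume s: "s \<in> leaf_cubes n"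
    then obtain r cs where "s = r # cs" using assms unfolding leaf_cubes_def by (cases s) auto
    moreover have "x \<in> {2..8}" if "x \<in> set cs" for x
    proof -
      have "x \<in> {1..8}" "x \<noteq> 1" using s that unfolding leaf_cubes_def \<open>s = r # cs\<close> by auto
      then show ?thesis by auto
    qed
    moreover have "r \<in> {1..8}" "length cs = n - 2"
      using s \<open>s = r # cs\<close> unfolding leaf_cubes_def by auto
    ultimately show "s \<in> (\<lambda>(r, cs). r # cs) ` ({1..8} \<times> {cs. set cs \<subseteq> {2..8} \<and> length cs = n - 2})"
      by (auto intro!: image_eqI[of _ _ "(r, cs)"])
  qed (use assms in \<open>auto simp: leaf_cubes_def\<close>)
  moreover have
    "inj_on (\<lambda>(r, cs). r # cs) ({1..8::nat} \<times> {cs. set cs \<subseteq> {2..8::nat} \<and> length cs = n - 2})"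
    by (auto simp: inj_on_def)
  ultimately show ?thesis
    by (simp add: card_image card_cartesian_product card_lists_length_eq)
qed

lemma finite_leaves: "finite A \<Longrightarrow> finite (leaves n A)"
  unfolding leaves_def using finite_leaf_cubes by simp

lemma card_leaves: "finite A \<Longrightarrow> card (leaves n A) = card (leaf_cubes n) * card A"
  unfolding leaves_def
  by (subst card_image) (auto simp: inj_on_def card_cartesian_product)

lemma leaves_disjoint: "A \<inter> B = {} \<Longrightarrow> leaves n A \<inter> leaves n B = {}"
  unfolding leaves_def by auto

lemma leaf_in_leaves: "s \<in> leaf_cubes n \<Longrightarrow> a \<in> A \<Longrightarrow> s @ [a] \<in> leaves n A"
  unfolding leaves_def by auto

lemma length_leaf_cube: "n \<ge> 2 \<Longrightarrow> s \<in> leaf_cubes n \<Longrightarrow> length s + 1 = n"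
  unfolding leaf_cubes_def by simp

lemma leaf_in_CCC_V: "n \<ge> 2 \<Longrightarrow> s \<in> leaf_cubes n \<Longrightarrow> a \<in> {1..8} \<Longrightarrow> s @ [a] \<in> CCC_V n"
  unfolding leaf_cubes_def CCC_V_snoc_iff by auto

lemma leaves_subset_CCC_V: "n \<ge> 2 \<Longrightarrow> A \<subseteq> {1..8} \<Longrightarrow> leaves n A \<subseteq> CCC_V n"
  unfolding leaves_def using leaf_in_CCC_V by auto

lemma leaf_decomposition:
  assumes "n \<ge> 2" "v \<in> CCC_V n" "length v = n"
  obtains s a where "s \<in> leaf_cubes n" "a \<in> {1..8}" "v = s @ [a]"
proof -
  obtain s a where v: "v = s @ [a]" using assms(2) unfolding CCC_V_iff by (metis rev_exhaust)
  have "set s \<subseteq> {1..8}" "a \<in> {1..8}" "1 \<notin> set (tl s)"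
    using assms(2) unfolding v CCC_V_snoc_iff by auto
  moreover have "length s = n - 1" using assms(3) v by simp
  ultimately show ?thesis using that v unfolding leaf_cubes_def by blast
qed

lemma leaf_neighbour:
  assumes "s @ [b] \<in> CCC_V n" "length s + 1 = n" "b \<noteq> 1" "y \<in> CCC_V n" "CCC_E (s @ [b]) y"
  shows "\<exists>c. y = s @ [c] \<and> cube_adj b c"
proof -
  have "length y \<le> n" using assms(4) by (simp add: CCC_V_iff)
  then have "butlast y = s \<and> cube_adj b (last y) \<and> y \<noteq> []"
    using assms(2,3,5) cube_adj_sym unfolding CCC_E_def CCC_E0_def by auto
  then show ?thesis by (metis append_butlast_last_id)
qed

lemma maximally_distant_antipode_in_leaf_cube:
  assumes "n \<ge> 2" "s \<in> leaf_cubes n" "a \<in> {1..8}" "b \<in> {1..8}" "cube_dist a b = 3" "b \<noteq> 1"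
  shows "maximally_distant (CCC_V n) CCC_E (s @ [a]) (s @ [b])"
proof -
  have V: "s @ [a] \<in> CCC_V n" "s @ [b] \<in> CCC_V n" using leaf_in_CCC_V assms by auto
  have "ccc_dist (s @ [a]) y \<le> ccc_dist (s @ [a]) (s @ [b])"
    if y: "y \<in> CCC_V n" "CCC_E (s @ [b]) y" for y
  proof -
    obtain c where "y = s @ [c]"
      using leaf_neighbour[OF V(2) length_leaf_cube[OF assms(1,2)] assms(6) y] by blast
    then show ?thesis
      using ccc_dist_append_prefix[of "[a]" _ s] cube_dist_le_3[of a c] assms(5) by simp
  qed
  then show ?thesis using V ccc.maximally_distant_iff by blast
qed

lemma maximally_distant_far_corners:
  assumes "n \<ge> 2" "s \<in> leaf_cubes n" "s' \<in> leaf_cubes n" "s \<noteq> s'"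
  shows "maximally_distant (CCC_V n) CCC_E (s @ [7]) (s' @ [7])"
proof -
  have V: "s @ [7] \<in> CCC_V n" "s' @ [7] \<in> CCC_V n" using leaf_in_CCC_V assms by auto
  have len: "length s + 1 = n" "length s' + 1 = n" using length_leaf_cube assms by auto
  then have "s' \<noteq> []" using assms(1) by auto
  moreover have "\<not> (\<exists>c z. s @ [7] = s' @ c # z)"
  proof
    assume "\<exists>c z. s @ [7] = s' @ c # z"
    then obtain c z where eq: "s @ [7] = s' @ c # z" by blast
    then have "z = []" using arg_cong[OF eq, of length] len by simp
    then show False using eq assms(4) by simp
  qed
  ultimately have dist: "ccc_dist (s @ [7]) (s' @ [c]) = ccc_dist (s @ [7]) s' + cube_dist 1 c + 1"
    for c
    using ccc_dist_snoc_outside by blast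
  have "cube_dist 1 7 = 3" by (simp add: cube_dist_def cube_coords_def)
  have "ccc_dist (s @ [7]) y \<le> ccc_dist (s @ [7]) (s' @ [7])"
    if y: "y \<in> CCC_V n" "CCC_E (s' @ [7]) y" for y
  proof -
    obtain c where "y = s' @ [c]" using leaf_neighbour[OF V(2) len(2) _ y] by auto
    then show ?thesis using dist[of c] dist[of 7] cube_dist_le_3[of 1 c] \<open>cube_dist 1 7 = 3\<close> by simp
  qed
  then show ?thesis using V ccc.maximally_distant_iff by blast
qed

lemma card_le_card_hitting_disjoint_family:
  assumes "finite R" "disjoint_family_on P I" "\<And>i. i \<in> I \<Longrightarrow> P i \<inter> R \<noteq> {}"
  shows "card I \<le> card (R \<inter> \<Union>(P ` I))"
proof -
  define f where "f i = (SOME x. x \<in> P i \<inter> R)" for i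
  have f: "f i \<in> P i \<inter> R" if "i \<in> I" for i
  proof -
    have "\<exists>x. x \<in> P i \<inter> R" using assms(3)[OF that] by blast
    then show ?thesis unfolding f_def by (rule someI_ex)
  qed
  have "inj_on f I"
  proof (rule inj_onI)
    fix i j assume "i \<in> I" "j \<in> I" "f i = f j"
    then have "f i \<in> P i \<inter> P j" using f by (metis IntD1 IntI)
    then show "i = j" using assms(2) \<open>i \<in> I\<close> \<open>j \<in> I\<close> unfolding disjoint_family_on_def by blast
  qed
  moreover have "f ` I \<subseteq> R \<inter> \<Union>(P ` I)" using f by blast
  ultimately show ?thesis using assms(1) by (intro card_inj_on_le) auto
qed

lemma antipodal_leaves_lower_bound:
  assumes "n \<ge> 2" "strong_resolving_set (CCC_V n) CCC_E R"
  shows "3 * card (leaf_cubes n) \<le> card (R \<inter> leaves n {2, 3, 4, 5, 6, 8})"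
proof -
  define I where "I = leaf_cubes n \<times> {2, 3, 4 :: nat}"
  define P where "P = (\<lambda>(s, a). {s @ [a], s @ [cube_antipode a]})"
  have "P i \<inter> R \<noteq> {}" if i: "i \<in> I" for i
  proof -
    obtain s a where i: "i = (s, a)" "s \<in> leaf_cubes n" "a \<in> {2, 3, 4}"
      using i unfolding I_def by blast
    have "mutually_maximally_distant (CCC_V n) CCC_E (s @ [a]) (s @ [cube_antipode a])"
      unfolding mutually_maximally_distant_def
      using maximally_distant_antipode_in_leaf_cube[OF assms(1) i(2)] cube_antipode_of_low_label[OF i(3)] cube_dist_sym
      by metis
    moreover have "s @ [a] \<noteq> s @ [cube_antipode a]" using cube_antipode_of_low_label[OF i(3)] by auto
    moreover have "s @ [a] \<in> CCC_V n" "s @ [cube_antipode a] \<in> CCC_V n"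
      using leaf_in_CCC_V[OF assms(1) i(2)] cube_antipode_of_low_label[OF i(3)] by auto
    ultimately have "s @ [a] \<in> R \<or> s @ [cube_antipode a] \<in> R"
      using ccc.strong_resolving_set_meets_mutually_maximally_distant assms(2) by blast
    then show ?thesis unfolding i P_def by auto
  qed
  moreover have "disjoint_family_on P I"
    unfolding disjoint_family_on_def I_def P_def by (auto simp: cube_antipode_def)
  moreover have "finite R"
    using assms(2) finite_CCC_V finite_subset unfolding strong_resolving_set_def by blast
  ultimately have "card I \<le> card (R \<inter> \<Union>(P ` I))" by (intro card_le_card_hitting_disjoint_family)
  also have "\<dots> \<le> card (R \<inter> leaves n {2, 3, 4, 5, 6, 8})"
  proof (intro card_mono Int_mono subsetI)
    fix x assume "x \<in> \<Union>(P ` I)"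
    then obtain s a where s: "s \<in> leaf_cubes n" and a: "a \<in> {2, 3, 4}"
      and x: "x \<in> {s @ [a], s @ [cube_antipode a]}"
      unfolding I_def P_def by blast
    from x consider "x = s @ [a]" | "x = s @ [cube_antipode a]" by blast
    then show "x \<in> leaves n {2, 3, 4, 5, 6, 8}"
      using leaf_in_leaves[OF s cube_antipode_of_low_label(6)[OF a]] leaf_in_leaves[OF s cube_antipode_of_low_label(7)[OF a]]
      by cases simp_all
  qed (use \<open>finite R\<close> in auto)
  finally show ?thesis unfolding I_def by (simp add: card_cartesian_product)
qed

lemma far_corners_lower_bound:
  assumes "n \<ge> 2" "strong_resolving_set (CCC_V n) CCC_E R"
  shows "card (leaf_cubes n) \<le> card (R \<inter> leaves n {7}) + 1"
proof -
  have "x = y" if x: "x \<in> leaves n {7} - R" and y: "y \<in> leaves n {7} - R" for x y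
  proof (rule ccontr)
    assume "x \<noteq> y"
    obtain s where s: "s \<in> leaf_cubes n" "x = s @ [7]" using x unfolding leaves_def by auto
    obtain s' where s': "s' \<in> leaf_cubes n" "y = s' @ [7]" using y unfolding leaves_def by auto
    have "s \<noteq> s'" using s s' \<open>x \<noteq> y\<close> by blast
    then have "mutually_maximally_distant (CCC_V n) CCC_E x y"
      unfolding mutually_maximally_distant_def s s'
      using maximally_distant_far_corners assms(1) s(1) s'(1) by blast
    moreover have "x \<in> CCC_V n" "y \<in> CCC_V n" using leaf_in_CCC_V assms(1) s s' by auto
    ultimately have "x \<in> R \<or> y \<in> R"
      using ccc.strong_resolving_set_meets_mutually_maximally_distant assms(2) \<open>x \<noteq> y\<close> by blast
    then show False using x y by blast
  qed
  then have "card (leaves n {7} - R) \<le> 1"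
    using card_le_Suc0_iff_eq[of "leaves n {7} - R"] finite_leaves by simp
  moreover have "card (leaves n {7}) = card (leaf_cubes n)" by (simp add: card_leaves)
  moreover have "card (leaves n {7}) = card (leaves n {7} \<inter> R) + card (leaves n {7} - R)"
    by (rule card_Int_Diff) (simp add: finite_leaves)
  ultimately show ?thesis by (simp add: Int_commute)
qed

lemma strong_resolving_set_card_ge:
  assumes "n \<ge> 2" "strong_resolving_set (CCC_V n) CCC_E R"
  shows "4 * card (leaf_cubes n) - 1 \<le> card R"
proof -
  have "finite R"
    using assms(2) finite_CCC_V finite_subset unfolding strong_resolving_set_def by blast
  have "leaves n {2, 3, 4, 5, 6, 8} \<inter> leaves n {7} = {}" by (rule leaves_disjoint) simp
  then have "card (R \<inter> leaves n {2, 3, 4, 5, 6, 8}) + card (R \<inter> leaves n {7})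
      = card ((R \<inter> leaves n {2, 3, 4, 5, 6, 8}) \<union> (R \<inter> leaves n {7}))"
    using \<open>finite R\<close> by (intro card_Un_disjoint[symmetric]) auto
  also have "\<dots> \<le> card R" using \<open>finite R\<close> by (intro card_mono) auto
  finally show ?thesis
    using antipodal_leaves_lower_bound[OF assms] far_corners_lower_bound[OF assms] by linarith
qed

definition ccc_resolving_set :: "nat \<Rightarrow> nat list set" where
  "ccc_resolving_set n = leaves n {2, 3, 4, 7} - {(1 # replicate (n - 2) 2) @ [7]}"

lemma card_ccc_resolving_set:
  assumes "n \<ge> 2"
  shows "card (ccc_resolving_set n) = 4 * card (leaf_cubes n) - 1"
proof -
  have "1 # replicate (n - 2) 2 \<in> leaf_cubes n" using assms unfolding leaf_cubes_def by auto
  then have "(1 # replicate (n - 2) 2) @ [7] \<in> leaves n {2, 3, 4, 7}" by (rule leaf_in_leaves) simp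
  then show ?thesis unfolding ccc_resolving_set_def by (simp add: card_leaves finite_leaves)
qed

lemma far_leaf_label_cases:
  assumes "a \<in> {1..8}" "b \<in> {1..8}"
    and "a = 7 \<or> (cube_dist a b = 3 \<and> a \<noteq> 1)" "b = 7 \<or> (cube_dist b a = 3 \<and> b \<noteq> 1)"
  shows "(a = 7 \<and> b = 7) \<or> a \<in> {2, 3, 4} \<or> b \<in> {2, 3, 4}"
  using assms by (elim cube_label_cases) (simp_all add: cube_dist_def cube_coords_def)

lemma far_leaves_meet_ccc_resolving_set:
  assumes "n \<ge> 2" "u \<in> CCC_V n" "v \<in> CCC_V n" "u \<noteq> v" "far_leaf n v u" "far_leaf n u v"
  shows "u \<in> ccc_resolving_set n \<or> v \<in> ccc_resolving_set n"
proof -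
  obtain s a where s: "s \<in> leaf_cubes n" "a \<in> {1..8}" "u = s @ [a]"
    using leaf_decomposition assms(1,2,5) unfolding far_leaf_def by metis
  obtain s' b where s': "s' \<in> leaf_cubes n" "b \<in> {1..8}" "v = s' @ [b]"
    using leaf_decomposition assms(1,3,6) unfolding far_leaf_def by metis
  have "(a = 7 \<and> b = 7) \<or> a \<in> {2, 3, 4} \<or> b \<in> {2, 3, 4}"
    using far_leaf_label_cases[OF s(2) s'(2)] assms(5,6) unfolding far_leaf_def s(3) s'(3) by auto
  then show ?thesis
    using leaf_in_leaves[OF s(1), of a "{2, 3, 4, 7}"] leaf_in_leaves[OF s'(1), of b "{2, 3, 4, 7}"]
      assms(4)
    unfolding ccc_resolving_set_def s(3) s'(3) by auto
qed

lemma strong_resolving_set_ccc_resolving_set: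
  assumes "n \<ge> 2"
  shows "strong_resolving_set (CCC_V n) CCC_E (ccc_resolving_set n)"
proof -
  have "ccc_resolving_set n \<subseteq> CCC_V n"
    unfolding ccc_resolving_set_def using leaves_subset_CCC_V[OF assms, of "{2, 3, 4, 7}"] by auto
  moreover have "u \<in> ccc_resolving_set n \<or> v \<in> ccc_resolving_set n"
    if "u \<in> CCC_V n" "v \<in> CCC_V n" "u \<noteq> v" "mutually_maximally_distant (CCC_V n) CCC_E u v" for u v
    using that far_leaves_meet_ccc_resolving_set[OF assms] maximally_distant_far_leaf[OF assms]
    unfolding mutually_maximally_distant_def by metis
  ultimately show ?thesis
    using ccc.strong_resolving_set_iff_covers_mutually_maximally_distant by blast
qed

theorem theorem2:
  fixes n :: nat
  assumes "n \<ge> 2"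
  shows "sdim (CCC_V n) CCC_E = 32 * 7 ^ (n - 2) - 1"
proof -
  have "sdim (CCC_V n) CCC_E = card (ccc_resolving_set n)"
    using sdim_eqI[OF strong_resolving_set_ccc_resolving_set[OF assms] finite_CCC_V]
      strong_resolving_set_card_ge[OF assms] card_ccc_resolving_set[OF assms] by simp
  also have "\<dots> = 32 * 7 ^ (n - 2) - 1"
    using card_ccc_resolving_set[OF assms] card_leaf_cubes[OF assms] by simp
  finally show ?thesis .
qed

end
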